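(* Let $(\mathcal L,f)$ be a Lagrangian pair with $\mathcal L$ Kählerian. If there is a point $q\in\mathcal L$ which is real ($\tau q=q$) and such that $f(q)\notin\mathbb{R}$, then there is an open neighborhood $U\subset\mathcal L$ of $q$ such that the Lagrangian cone $\mathrm{con}(U,f|_U)$ is Kählerian, i.e. the Hermitian form $\hat\gamma=\sqrt{-1}\,\hat\Omega(\cdot,\hat\tau\cdot)$ of $\mathbb{C}^{2n+2}$ restricts to a non-degenerate form on it.
   Context: $\mathbb{C}^{2n}$: coordinates $(z,w)$, $\Omega=\sum dz^i\wedge dw_i$, real structure $\tau$ (complex conjugation), $\gamma=\sqrt{-1}\Omega(\cdot,\tau\cdot)$, $\eta_q=\Omega(q,\cdot)$. A Lagrangian pair $(\mathcal L,f)$: complex Lagrangian submanifold $\mathcal L\subset\mathbb{C}^{2n}$, holomorphic $f$ with $df=-\eta|_{\mathcal L}$; $\mathcal L$ is Kählerian if $\gamma|_{\mathcal L}$ is non-degenerate. $\mathbb{C}^{2n+2}=\mathbb{C}^2\times\mathbb{C}^{2n}$ with coordinates $(z^0,w_0,z,w)$, $\hat\Omega=dz^0\wedge dw_0+\Omega$, real structure $\hat\tau$ (complex conjugation). $\mathrm{con}(\mathcal L,f):=\mathbb{C}^*\cdot\{(1,f(q),q)\mid q\in\mathcal L\}$. *)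

theory Defs
  imports "HOL-Analysis.Analysis"
begin

text \<open>Coordinates: a point of C^{2k} is a vector indexed by 'k + 'k;
  index Inl i is z^i, index Inr i is w_i.  C^{2n+2} uses the index type 'n option,
  where None is the extra coordinate (z^0, w_0).\<close>

definition Omega :: "complex^('k::finite + 'k) \<Rightarrow> complex^('k + 'k) \<Rightarrow> complex" where
  "Omega x y = (\<Sum>i\<in>UNIV. x$(Inl i) * y$(Inr i) - x$(Inr i) * y$(Inl i))"

definition tau :: "complex^('m::finite) \<Rightarrow> complex^'m" where
  "tau x = (\<chi> j. cnj (x$j))"

definition gamma :: "complex^('k::finite + 'k) \<Rightarrow> complex^('k + 'k) \<Rightarrow> complex" where
  "gamma x y = \<i> * Omega x (tau y)"

definition cchart ::
  "(complex^('m::finite)) set \<Rightarrow> (complex^'m) set \<Rightarrow> (complex^('d::finite)) set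
     \<Rightarrow> (complex^'d \<Rightarrow> complex^'m) \<Rightarrow> (complex^'d \<Rightarrow> complex^'d \<Rightarrow> complex^'m) \<Rightarrow> bool" where
  "cchart S W D \<phi> \<phi>' \<longleftrightarrow> open W \<and> open D \<and> \<phi> ` D = S \<inter> W \<and> inj_on \<phi> D \<and>
     continuous_on (S \<inter> W) (inv_into D \<phi>) \<and>
     (\<forall>d\<in>D. (\<phi> has_derivative \<phi>' d) (at d) \<and> inj (\<phi>' d) \<and>
        (\<forall>c h. \<phi>' d (c *s h) = c *s \<phi>' d h))"

text \<open>Embedded complex submanifold of complex dimension CARD('d).\<close>
definition csubmanifold :: "'d::finite itself \<Rightarrow> (complex^('m::finite)) set \<Rightarrow> bool" where
  "csubmanifold (_::'d itself) S \<longleftrightarrow>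
     (\<forall>p\<in>S. \<exists>W D (\<phi>::complex^'d \<Rightarrow> complex^'m) \<phi>'. p \<in> W \<and> cchart S W D \<phi> \<phi>')"

definition tangent_space :: "(complex^('m::finite)) set \<Rightarrow> complex^'m \<Rightarrow> (complex^'m) set" where
  "tangent_space S p = {v. \<exists>g e. 0 < e \<and> g 0 = p \<and> (\<forall>t. \<bar>t\<bar> < e \<longrightarrow> g t \<in> S) \<and>
                              (g has_vector_derivative v) (at (0::real))}"

definition nondegenerate_on :: "('v::zero \<Rightarrow> 'v \<Rightarrow> complex) \<Rightarrow> 'v set \<Rightarrow> bool" where
  "nondegenerate_on B T \<longleftrightarrow> (\<forall>v\<in>T. (\<forall>u\<in>T. B v u = 0) \<longrightarrow> v = 0)"

definition complex_lagrangian :: "(complex^('k::finite + 'k)) set \<Rightarrow> bool" where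
  "complex_lagrangian L \<longleftrightarrow> csubmanifold TYPE('k) L \<and>
     (\<forall>p\<in>L. \<forall>u\<in>tangent_space L p. \<forall>v\<in>tangent_space L p. Omega u v = 0)"

definition kaehlerian :: "(complex^('k::finite + 'k)) set \<Rightarrow> bool" where
  "kaehlerian L \<longleftrightarrow> (\<forall>p\<in>L. nondegenerate_on gamma (tangent_space L p))"

text \<open>Lagrangian pair: f holomorphic on L with df = - eta restricted to L,
  where eta_q = Omega(q, -). Expressed in every local holomorphic chart of L.\<close>
definition lagrangian_pair :: "(complex^('k::finite + 'k)) set \<Rightarrow> (complex^('k + 'k) \<Rightarrow> complex) \<Rightarrow> bool" where
  "lagrangian_pair L f \<longleftrightarrow> complex_lagrangian L \<and>
     (\<forall>W D (\<phi>::complex^'k \<Rightarrow> complex^('k+'k)) \<phi>'. cchart L W D \<phi> \<phi>' \<longrightarrow>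
        (\<forall>d\<in>D. ((f \<circ> \<phi>) has_derivative (\<lambda>h. - Omega (\<phi> d) (\<phi>' d h))) (at d)))"

definition lift :: "(complex^('k::finite + 'k) \<Rightarrow> complex) \<Rightarrow> complex^('k + 'k) \<Rightarrow> complex^('k option + 'k option)" where
  "lift f q = (\<chi> j. case j of Inl None \<Rightarrow> 1 | Inr None \<Rightarrow> f q
                             | Inl (Some i) \<Rightarrow> q$(Inl i) | Inr (Some i) \<Rightarrow> q$(Inr i))"

definition con :: "(complex^('k::finite + 'k)) set \<Rightarrow> (complex^('k + 'k) \<Rightarrow> complex) \<Rightarrow> (complex^('k option + 'k option)) set" where
  "con U f = {c *s lift f q | c q. c \<noteq> 0 \<and> q \<in> U}"

end

theory Submission
  imports Defs "HOL-Complex_Analysis.Cauchy_Integral_Formula"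
begin

text \<open>
  Parametrise L near q by a holomorphic chart phi and the cone by (c, d) \<mapsto> c (1, f (phi d), phi d).
  Since df = -eta on L, the derivative of this map sends (k0, h) to
  k0 (1, f p, p) + c (0, - Omega p v, v), where p = phi d and v = phi' d h.  The vector (1, f p, p) is
  Omega-orthogonal to every (0, - Omega p v, v), so on the cone Omega is c^2 times Omega on T_p L and
  the cone is Lagrangian.  At the real point p = q with c = 1 the Hermitian form becomes
  sqrt(-1) k0 cnj l0 (cnj (f q) - f q) + gamma v w, which is non-degenerate because f q is not real and
  L is Kaehlerian.  Hence the Gram determinant of the Hermitian form on the tangent space of the cone
  is non-zero over q.  It depends continuously on d, because chart derivatives are holomorphic and
  therefore continuous, so it stays non-zero over a ball around the parameter of q; by homogeneity of
  the cone this covers every tangent space of the cone over the image U of that ball.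
\<close>

section \<open>Tangent spaces of holomorphic charts\<close>

lemma has_derivative_eventually_nhds:
  assumes "(f has_derivative f') (at x)" and "e > 0"
  shows "eventually (\<lambda>y. norm (f y - f x - f' (y - x)) \<le> e * norm (y - x)) (nhds x)"
  using assms by (auto simp: has_derivative_at_alt eventually_nhds_metric dist_norm)

lemma has_derivative_eventually_norm_le:
  assumes "(f has_derivative f') (at x)"
  obtains M where "M > 0" and "eventually (\<lambda>y. norm (f y - f x) \<le> M * norm (y - x)) (nhds x)"
proof -
  obtain B where "B > 0" and B: "\<And>h. norm (f' h) \<le> norm h * B"
    using assms bounded_linear.pos_bounded has_derivative_bounded_linear by blast
  have "eventually (\<lambda>y. norm (f y - f x) \<le> (B + 1) * norm (y - x)) (nhds x)"
    using has_derivative_eventually_nhds[OF assms zero_less_one]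
  proof eventually_elim
    case (elim y)
    have "norm (f y - f x) \<le> norm (f' (y - x)) + norm (f y - f x - f' (y - x))"
      by (metis add.commute diff_add_cancel norm_triangle_ineq)
    also have "\<dots> \<le> (B + 1) * norm (y - x)"
      using B[of "y - x"] elim by (simp add: algebra_simps)
    finally show ?case .
  qed
  then show thesis using \<open>B > 0\<close> by (intro that[of "B + 1"]) auto
qed

lemma immersion_eventually_norm_le:
  assumes der: "(\<phi> has_derivative \<phi>') (at x)"
    and P: "bounded_linear P" and P_inv: "\<And>v. P (\<phi>' v) = v"
  obtains C where "C > 0" and "eventually (\<lambda>y. norm (y - x) \<le> C * norm (\<phi> y - \<phi> x)) (nhds x)"
proof -
  obtain C where C: "C > 0" "\<And>v. norm (P v) \<le> norm v * C"
    using P bounded_linear.pos_bounded by blast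
  have "eventually (\<lambda>y. norm (\<phi> y - \<phi> x - \<phi>' (y - x)) \<le> 1 / (2 * C) * norm (y - x)) (nhds x)"
    using has_derivative_eventually_nhds[OF der, of "1 / (2 * C)"] C(1) by simp
  then have "eventually (\<lambda>y. norm (y - x) \<le> (2 * C) * norm (\<phi> y - \<phi> x)) (nhds x)"
  proof eventually_elim
    case (elim y)
    have "norm (y - x) = norm (P (\<phi>' (y - x)))" by (simp add: P_inv)
    also have "\<dots> \<le> norm (\<phi>' (y - x)) * C" by (rule C(2))
    also have "\<dots> \<le> (norm (\<phi> y - \<phi> x) + norm (\<phi> y - \<phi> x - \<phi>' (y - x))) * C"
      using C(1) norm_triangle_sub[of "\<phi>' (y - x)" "\<phi> y - \<phi> x"]
      by (intro mult_right_mono) (auto simp: norm_minus_commute)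
    also have "\<dots> \<le> (norm (\<phi> y - \<phi> x) + 1 / (2 * C) * norm (y - x)) * C"
      using C(1) elim by (intro mult_right_mono add_left_mono) auto
    also have "\<dots> = C * norm (\<phi> y - \<phi> x) + norm (y - x) / 2"
      using C(1) by (simp add: field_simps)
    finally show ?case by simp
  qed
  then show thesis using C(1) by (intro that[of "2 * C"]) auto
qed

lemma has_derivative_remainder_zero:
  fixes \<phi> :: "'a::real_normed_vector \<Rightarrow> 'b::real_normed_vector"
    and k :: "'c::real_normed_vector \<Rightarrow> 'a"
  assumes der: "(\<phi> has_derivative \<phi>') (at (k s))" and k_cont: "isCont k s" and "K > 0"
    and k_Lipschitz: "eventually (\<lambda>t. norm (k t - k s) \<le> K * norm (t - s)) (at s)"
  shows "((\<lambda>t. \<phi> (k t) - \<phi> (k s) - \<phi>' (k t - k s)) has_derivative (\<lambda>_. 0)) (at s)"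
  unfolding has_derivative_within_alt2
proof (intro conjI allI impI)
  interpret \<phi>': bounded_linear \<phi>' using der by (rule has_derivative_bounded_linear)
  fix e :: real assume "e > 0"
  then have "e / K > 0" using \<open>K > 0\<close> by simp
  from eventually_compose_filterlim[OF has_derivative_eventually_nhds[OF der this] k_cont[unfolded isCont_def]]
  have "eventually (\<lambda>t. norm (\<phi> (k t) - \<phi> (k s) - \<phi>' (k t - k s)) \<le> e / K * norm (k t - k s)) (at s)" .
  then show "eventually (\<lambda>t. norm (\<phi> (k t) - \<phi> (k s) - \<phi>' (k t - k s) -
      (\<phi> (k s) - \<phi> (k s) - \<phi>' (k s - k s)) - 0) \<le> e * norm (t - s)) (at s)"
    using k_Lipschitz
  proof eventually_elim
    case (elim t)
    have "e / K * norm (k t - k s) \<le> e / K * (K * norm (t - s))"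
      using elim(2) \<open>e / K > 0\<close> by (intro mult_left_mono) auto
    with elim(1) \<open>K > 0\<close> show ?case by (simp add: \<phi>'.zero)
  qed
qed (rule bounded_linear_zero)

lemma has_derivative_through_immersion:
  fixes \<phi> :: "'a::real_normed_vector \<Rightarrow> 'b::real_normed_vector"
    and k :: "'c::real_normed_vector \<Rightarrow> 'a"
  assumes der: "(\<phi> has_derivative \<phi>') (at (k s))"
    and P: "bounded_linear P" and P_inv: "\<And>v. P (\<phi>' v) = v"
    and k_cont: "isCont k s"
    and factor: "eventually (\<lambda>t. \<phi> (k t) = g t) (nhds s)"
    and g_der: "(g has_derivative g') (at s)"
  shows "(k has_derivative (\<lambda>t. P (g' t))) (at s)"
proof -
  interpret P: bounded_linear P by fact
  interpret \<phi>': bounded_linear \<phi>' using der by (rule has_derivative_bounded_linear)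
  \<comment> \<open>k t - k s = P (g t - g s) - P (R t), and R t = o(|t - s|) since k is Lipschitz at s\<close>
  define R where "R t = \<phi> (k t) - \<phi> (k s) - \<phi>' (k t - k s)" for t
  have g_s: "g s = \<phi> (k s)"
    using eventually_nhds_x_imp_x[OF factor] by simp
  have factor_at: "eventually (\<lambda>t. \<phi> (k t) = g t) (at s)"
    using factor by (simp add: eventually_at_filter eventually_mono)
  obtain C where "C > 0"
    and C: "eventually (\<lambda>y. norm (y - k s) \<le> C * norm (\<phi> y - \<phi> (k s))) (nhds (k s))"
    using immersion_eventually_norm_le[OF der P P_inv] by blast
  obtain M where "M > 0" and M: "eventually (\<lambda>t. norm (g t - g s) \<le> M * norm (t - s)) (nhds s)"
    using has_derivative_eventually_norm_le[OF g_der] by blast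
  have "eventually (\<lambda>t. norm (k t - k s) \<le> C * norm (\<phi> (k t) - \<phi> (k s))) (at s)"
    using eventually_compose_filterlim[OF C k_cont[unfolded isCont_def]] .
  moreover have "eventually (\<lambda>t. norm (g t - g s) \<le> M * norm (t - s)) (at s)"
    using M by (simp add: eventually_at_filter eventually_mono)
  ultimately have "eventually (\<lambda>t. norm (k t - k s) \<le> (C * M) * norm (t - s)) (at s)"
    using factor_at
  proof eventually_elim
    case (elim t)
    with \<open>C > 0\<close> have "C * norm (\<phi> (k t) - \<phi> (k s)) \<le> C * (M * norm (t - s))"
      by (simp add: g_s)
    with elim(1) show ?case by simp
  qed
  with der k_cont have R_der: "(R has_derivative (\<lambda>_. 0)) (at s)"
    unfolding R_def using \<open>C > 0\<close> \<open>M > 0\<close> by (intro has_derivative_remainder_zero) auto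
  have "((\<lambda>t. k s - P (g s) + P (g t) - P (R t)) has_derivative (\<lambda>t. P (g' t))) (at s)"
    using P.has_derivative[OF R_der] P.has_derivative[OF g_der]
    by (auto intro!: derivative_eq_intros simp: P.zero)
  moreover have "eventually (\<lambda>t. k s - P (g s) + P (g t) - P (R t) = k t) (at s)"
    using factor_at
  proof eventually_elim
    case (elim t)
    have "k t - k s = P (\<phi>' (k t - k s))" by (simp add: P_inv)
    also have "\<dots> = P (g t - g s) - P (R t)"
      by (simp add: R_def elim g_s P.diff[symmetric])
    finally show ?case by (simp add: P.diff algebra_simps)
  qed
  ultimately show ?thesis
    by (rule has_derivative_transform_eventually) (simp_all add: R_def \<phi>'.zero)
qed

lemma chart_derivative_in_tangent_space:
  assumes chart: "cchart S W D \<phi> \<phi>'" and d: "d \<in> D"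
  shows "\<phi>' d h \<in> tangent_space S (\<phi> d)"
proof -
  have "open D" and im: "\<phi> ` D = S \<inter> W" and der: "(\<phi> has_derivative \<phi>' d) (at d)"
    using chart d by (auto simp: cchart_def)
  interpret \<phi>': bounded_linear "\<phi>' d" using der by (rule has_derivative_bounded_linear)
  obtain r where r: "r > 0" "ball d r \<subseteq> D" using \<open>open D\<close> d open_contains_ball by blast
  have h1: "norm h + 1 > 0" by (simp add: add_nonneg_pos)
  define e where "e = r / (norm h + 1)"
  have e: "e > 0" using r h1 by (simp add: e_def)
  have "\<phi> (d + t *\<^sub>R h) \<in> S" if "\<bar>t\<bar> < e" for t
  proof -
    have "norm (t *\<^sub>R h) \<le> \<bar>t\<bar> * (norm h + 1)" by (simp add: mult_left_mono)
    also have "\<dots> < e * (norm h + 1)"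
      using that h1 by (intro mult_strict_right_mono) auto
    also have "\<dots> = r" using h1 by (simp add: e_def)
    finally have "d + t *\<^sub>R h \<in> D" using r by (auto simp: dist_norm)
    then show ?thesis using im by auto
  qed
  moreover have "((\<lambda>t. \<phi> (d + t *\<^sub>R h)) has_vector_derivative \<phi>' d h) (at 0)"
  proof -
    have "((\<lambda>t::real. d + t *\<^sub>R h) has_derivative (\<lambda>t. t *\<^sub>R h)) (at 0)"
      by (auto intro!: derivative_eq_intros)
    from has_derivative_compose[OF this, of \<phi> "\<phi>' d"] der show ?thesis
      by (simp add: has_vector_derivative_def \<phi>'.scaleR o_def)
  qed
  ultimately show ?thesis
    unfolding tangent_space_def using e by (intro CollectI exI[of _ "\<lambda>t. \<phi> (d + t *\<^sub>R h)"] exI[of _ e]) auto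
qed

lemma chart_inverse_along_curve:
  fixes g :: "'c::metric_space \<Rightarrow> complex^'m::finite"
  assumes chart: "cchart S W D \<phi> \<phi>'" and "d \<in> D" and "g s = \<phi> d"
    and g_cont: "isCont g s" and g_S: "eventually (\<lambda>t. g t \<in> S) (nhds s)"
  shows "isCont (\<lambda>t. inv_into D \<phi> (g t)) s"
    and "eventually (\<lambda>t. \<phi> (inv_into D \<phi> (g t)) = g t) (nhds s)"
proof -
  have "open W" and im: "\<phi> ` D = S \<inter> W" and inv_cont: "continuous_on (S \<inter> W) (inv_into D \<phi>)"
    using chart by (auto simp: cchart_def)
  have g_lim: "(g \<longlongrightarrow> g s) (nhds s)"
    using g_cont tendsto_at_iff_tendsto_nhds isCont_def by blast
  have "g s \<in> W" using im \<open>d \<in> D\<close> \<open>g s = \<phi> d\<close> by auto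
  with g_lim \<open>open W\<close> have "eventually (\<lambda>t. g t \<in> W) (nhds s)"
    by (rule topological_tendstoD)
  with g_S have g_SW: "eventually (\<lambda>t. g t \<in> S \<inter> W) (nhds s)"
    by eventually_elim auto
  then show "eventually (\<lambda>t. \<phi> (inv_into D \<phi> (g t)) = g t) (nhds s)"
    by eventually_elim (auto simp: im[symmetric] f_inv_into_f)
  have "continuous (at (g s) within (S \<inter> W)) (inv_into D \<phi>)"
    using inv_cont \<open>g s = \<phi> d\<close> \<open>d \<in> D\<close> im
    by (metis IntI continuous_on_eq_continuous_within image_eqI)
  moreover have "eventually (\<lambda>t. g t \<in> S \<inter> W) (at s)"
    using g_SW by (simp add: eventually_at_filter eventually_mono)
  ultimately show "isCont (\<lambda>t. inv_into D \<phi> (g t)) s"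
    unfolding isCont_def using g_cont[unfolded isCont_def] by (rule continuous_within_tendsto_compose)
qed

lemma tangent_space_subset_chart_derivative_range:
  fixes \<phi> :: "complex^'d::finite \<Rightarrow> complex^'m::finite"
  assumes chart: "cchart S W D \<phi> \<phi>'" and d: "d \<in> D" and v: "v \<in> tangent_space S (\<phi> d)"
  shows "v \<in> range (\<phi>' d)"
proof -
  have der: "(\<phi> has_derivative \<phi>' d) (at d)" and "inj_on \<phi> D" and "inj (\<phi>' d)"
    using chart d by (auto simp: cchart_def)
  obtain P where "linear P" "P \<circ> \<phi>' d = id"
    using linear_injective_left_inverse[OF has_derivative_linear[OF der] \<open>inj (\<phi>' d)\<close>] by blast
  then have P: "bounded_linear P" "\<And>w. P (\<phi>' d w) = w"
    by (auto simp: linear_conv_bounded_linear fun_eq_iff)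
  obtain g e where g: "0 < e" "g 0 = \<phi> d" "\<And>t. \<bar>t\<bar> < e \<Longrightarrow> g t \<in> S"
    "(g has_derivative (\<lambda>t. t *\<^sub>R v)) (at 0)"
    using v unfolding tangent_space_def has_vector_derivative_def by blast
  have "eventually (\<lambda>t. g t \<in> S) (nhds (0::real))"
    unfolding eventually_nhds_metric using g(1,3) by (auto simp: dist_norm)
  note lift = chart_inverse_along_curve[OF chart d g(2) has_derivative_continuous[OF g(4)] this]
  define k where "k t = inv_into D \<phi> (g t)" for t
  have "k 0 = d" using g(2) \<open>inj_on \<phi> D\<close> d by (simp add: k_def)
  then have der_k0: "(\<phi> has_derivative \<phi>' d) (at (k 0))" using der by simp
  have k_der: "(k has_derivative (\<lambda>t. P (t *\<^sub>R v))) (at 0)"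
    using has_derivative_through_immersion[OF der_k0 P(1) P(2) lift[folded k_def] g(4)] .
  have "((\<lambda>t. \<phi> (k t)) has_derivative (\<lambda>t. \<phi>' d (P (t *\<^sub>R v)))) (at 0)"
    using has_derivative_compose[OF k_der der_k0] by (simp add: o_def)
  moreover have "eventually (\<lambda>t. \<phi> (k t) = g t) (at 0)"
    using lift(2) by (simp add: k_def eventually_at_filter eventually_mono)
  ultimately have "(g has_derivative (\<lambda>t. \<phi>' d (P (t *\<^sub>R v)))) (at 0)"
    by (rule has_derivative_transform_eventually) (use \<open>k 0 = d\<close> g(2) in simp_all)
  with g(4) have "(\<lambda>t. t *\<^sub>R v) = (\<lambda>t. \<phi>' d (P (t *\<^sub>R v)))"
    by (rule has_derivative_unique)
  then have "v = \<phi>' d (P v)" by (metis scaleR_one)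
  then show ?thesis by (rule range_eqI)
qed

lemma tangent_space_chart:
  fixes \<phi> :: "complex^'d::finite \<Rightarrow> complex^'m::finite"
  assumes "cchart S W D \<phi> \<phi>'" and "d \<in> D"
  shows "tangent_space S (\<phi> d) = range (\<phi>' d)"
  using chart_derivative_in_tangent_space[OF assms] tangent_space_subset_chart_derivative_range[OF assms]
  by blast

lemma cchart_restrict:
  assumes chart: "cchart S W D \<phi> \<phi>'" and "open B" and "B \<subseteq> D"
  shows "cchart (\<phi> ` B) W B \<phi> \<phi>'"
proof -
  have "open W" and im: "\<phi> ` D = S \<inter> W" and inj: "inj_on \<phi> D"
    and inv_cont: "continuous_on (S \<inter> W) (inv_into D \<phi>)"
    and local: "\<forall>d\<in>D. (\<phi> has_derivative \<phi>' d) (at d) \<and> inj (\<phi>' d) \<and>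
        (\<forall>c h. \<phi>' d (c *s h) = c *s \<phi>' d h)"
    using chart by (simp_all add: cchart_def)
  have inj_B: "inj_on \<phi> B" using inj \<open>B \<subseteq> D\<close> by (rule inj_on_subset)
  have "continuous_on (\<phi> ` B) (inv_into D \<phi>)"
    by (rule continuous_on_subset[OF inv_cont]) (use \<open>B \<subseteq> D\<close> im in auto)
  moreover have "inv_into D \<phi> y = inv_into B \<phi> y" if "y \<in> \<phi> ` B" for y
  proof -
    from that obtain b where "b \<in> B" "y = \<phi> b" by blast
    then show ?thesis using inj inj_B \<open>B \<subseteq> D\<close> by (auto simp: inv_into_f_f)
  qed
  ultimately have inv_cont_B: "continuous_on (\<phi> ` B) (inv_into B \<phi>)"
    by (rule continuous_on_eq)
  have image_B: "\<phi> ` B \<inter> W = \<phi> ` B" using \<open>B \<subseteq> D\<close> im by auto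
  have local_B: "\<forall>d\<in>B. (\<phi> has_derivative \<phi>' d) (at d) \<and> inj (\<phi>' d) \<and>
      (\<forall>c h. \<phi>' d (c *s h) = c *s \<phi>' d h)"
    using local \<open>B \<subseteq> D\<close> by (meson subsetD)
  show ?thesis
    unfolding cchart_def image_B
    by (intro conjI refl \<open>open W\<close> \<open>open B\<close> inj_B inv_cont_B local_B)
qed

lemma openin_chart_image:
  assumes chart: "cchart S W D \<phi> \<phi>'" and "open B" and "B \<subseteq> D"
  shows "openin (top_of_set S) (\<phi> ` B)"
proof -
  have "open W" and im: "\<phi> ` D = S \<inter> W" and inj: "inj_on \<phi> D"
    and inv_cont: "continuous_on (S \<inter> W) (inv_into D \<phi>)"
    using chart by (auto simp: cchart_def)
  have "\<phi> ` B = (S \<inter> W) \<inter> inv_into D \<phi> -` B"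
  proof
    show "\<phi> ` B \<subseteq> (S \<inter> W) \<inter> inv_into D \<phi> -` B"
      using \<open>B \<subseteq> D\<close> im inj by (auto simp: inv_into_f_f subsetD)
    show "(S \<inter> W) \<inter> inv_into D \<phi> -` B \<subseteq> \<phi> ` B"
      using im by (auto intro: image_eqI[OF f_inv_into_f[symmetric]])
  qed
  then have "openin (top_of_set (S \<inter> W)) (\<phi> ` B)"
    using continuous_openin_preimage_gen[OF inv_cont \<open>open B\<close>] by simp
  moreover have "openin (top_of_set S) (S \<inter> W)"
    using \<open>open W\<close> by (simp add: openin_open_Int)
  ultimately show ?thesis by (rule openin_trans)
qed

lemma vec_linearI:
  fixes T :: "'a::field^'m::finite \<Rightarrow> 'a^'k::finite"
  assumes "\<And>x y. T (x + y) = T x + T y" and "\<And>c x. T (c *s x) = c *s T x"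
  shows "Vector_Spaces.linear (*s) (*s) T"
  using assms by (simp add: Vector_Spaces.linear_iff vec.vector_space_axioms)

lemma cchart_derivative_linear:
  assumes "cchart S W D \<phi> \<phi>'" and "d \<in> D"
  shows "Vector_Spaces.linear (*s) (*s) (\<phi>' d)"
proof -
  have "(\<phi> has_derivative \<phi>' d) (at d)" and hom: "\<And>c h. \<phi>' d (c *s h) = c *s \<phi>' d h"
    using assms by (auto simp: cchart_def)
  then have "linear (\<phi>' d)" by (simp add: has_derivative_linear)
  then show ?thesis by (intro vec_linearI hom) (simp add: linear_add)
qed

section \<open>Continuity of complex derivatives\<close>

lemma has_derivative_vec_componentwise:
  fixes f :: "'a::real_normed_vector \<Rightarrow> 'b::euclidean_space^'m::finite"
  assumes "\<And>j. ((\<lambda>x. f x $ j) has_derivative (\<lambda>h. f' h $ j)) (at x)"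
  shows "(f has_derivative f') (at x)"
proof -
  have "((\<lambda>x. f x \<bullet> i) has_derivative (\<lambda>h. f' h \<bullet> i)) (at x)" if "i \<in> Basis" for i
  proof -
    from that obtain j b where i: "i = axis j b" "b \<in> Basis" by (auto simp: Basis_vec_def)
    show ?thesis
      using has_derivative_inner_left[OF assms, of j b] by (simp add: i inner_axis)
  qed
  then show ?thesis using has_derivative_componentwise_within[of f f' x UNIV] by simp
qed

lemma norm_vector_scalar_mult: "norm (c *s (x::'a::real_normed_field^'m::finite)) = norm c * norm x"
  by (simp add: norm_vec_def norm_mult L2_set_right_distrib)

lemma uniform_limit_translate:
  fixes F :: "'a::{real_normed_vector, heine_borel} \<Rightarrow> 'b::metric_space"
  assumes cont: "continuous_on (cball x0 R) F" and "R > 0"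
    and small: "\<And>z. z \<in> Z \<Longrightarrow> norm (p z) \<le> R / 2"
  shows "uniform_limit Z (\<lambda>x z. F (x + p z)) (\<lambda>z. F (x0 + p z)) (at x0)"
  unfolding uniform_limit_iff
proof (intro allI impI)
  fix e :: real assume "e > 0"
  obtain \<delta> where \<delta>: "\<delta> > 0"
    "\<And>x x'. x \<in> cball x0 R \<Longrightarrow> x' \<in> cball x0 R \<Longrightarrow> dist x' x < \<delta> \<Longrightarrow> dist (F x') (F x) < e"
    using compact_uniformly_continuous[OF cont compact_cball] \<open>e > 0\<close>
    unfolding uniformly_continuous_on_def by blast
  have "eventually (\<lambda>x. x \<in> ball x0 (min \<delta> (R / 2))) (at x0)"
    using \<delta>(1) \<open>R > 0\<close> by (intro eventually_at_in_open') auto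
  then show "eventually (\<lambda>x. \<forall>z\<in>Z. dist (F (x + p z)) (F (x0 + p z)) < e) (at x0)"
  proof eventually_elim
    case (elim x)
    show ?case
    proof
      fix z assume "z \<in> Z"
      then have "norm (p z) \<le> R / 2" by (rule small)
      moreover have "dist x0 (x + p z) \<le> dist x0 x + norm (p z)"
        using norm_triangle_ineq4[of "x0 - x" "p z"] by (simp add: dist_norm algebra_simps)
      ultimately have "x0 + p z \<in> cball x0 R" "x + p z \<in> cball x0 R"
        using elim \<open>R > 0\<close> by (auto simp: dist_norm)
      moreover have "dist (x + p z) (x0 + p z) < \<delta>"
        using elim by (simp add: dist_commute)
      ultimately show "dist (F (x + p z)) (F (x0 + p z)) < e" by (rule \<delta>(2))
    qed
  qed
qed

lemma has_field_derivative_along_complex_line: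
  fixes \<phi> :: "complex^'d::finite \<Rightarrow> complex^'m::finite"
  assumes der: "(\<phi> has_derivative \<phi>') (at (d + z *s h))"
    and clinear: "\<And>c. \<phi>' (c *s h) = c *s \<phi>' h"
  shows "((\<lambda>z. \<phi> (d + z *s h) $ j) has_field_derivative \<phi>' h $ j) (at z)"
proof -
  have "((\<lambda>z::complex. d + z *s h) has_derivative (\<lambda>c. c *s h)) (at z)"
    by (rule has_derivative_vec_componentwise) (auto intro!: derivative_eq_intros)
  from has_derivative_compose[OF this der] clinear
  have "((\<lambda>z. \<phi> (d + z *s h)) has_derivative (\<lambda>c. c *s \<phi>' h)) (at z)"
    by (simp add: o_def)
  from bounded_linear.has_derivative[OF bounded_linear_vec_nth[of j] this] show ?thesis
    unfolding has_field_derivative_def by (rule has_derivative_eq_rhs) (auto simp: mult.commute)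
qed

lemma ball_vector_scalar_mult_le:
  fixes h :: "'a::real_normed_field^'m::finite"
  assumes "e > 0"
  obtains r where "r > 0" and "\<And>z. z \<in> ball 0 r \<Longrightarrow> norm (z *s h) \<le> e"
proof
  have h1: "norm h + 1 > 0" by (simp add: add_nonneg_pos)
  show "e / (norm h + 1) > 0" using assms h1 by simp
  fix z :: 'a assume "z \<in> ball 0 (e / (norm h + 1))"
  then have "norm z * (norm h + 1) \<le> e" using h1 by (simp add: field_simps)
  moreover have "norm (z *s h) \<le> norm z * (norm h + 1)"
    by (simp add: norm_vector_scalar_mult mult_left_mono)
  ultimately show "norm (z *s h) \<le> e" by linarith
qed

text \<open>Charts only come with pointwise derivatives.  Continuity of the derivative follows from
  holomorphy along complex lines: derivatives of uniformly convergent holomorphic functions converge.\<close>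
lemma complex_derivative_tendsto:
  fixes \<phi> :: "complex^'d::finite \<Rightarrow> complex^'m::finite"
  assumes "open D" and "d0 \<in> D"
    and der: "\<And>d. d \<in> D \<Longrightarrow> (\<phi> has_derivative \<phi>' d) (at d)"
    and clinear: "\<And>d c h. d \<in> D \<Longrightarrow> \<phi>' d (c *s h) = c *s \<phi>' d h"
  shows "((\<lambda>d. \<phi>' d h) \<longlongrightarrow> \<phi>' d0 h) (at d0)"
proof (rule vec_tendstoI)
  fix j
  obtain R where R: "R > 0" "cball d0 R \<subseteq> D"
    using \<open>open D\<close> \<open>d0 \<in> D\<close> open_contains_cball by blast
  obtain r where "r > 0" and small: "\<And>z. z \<in> ball 0 r \<Longrightarrow> norm (z *s h) \<le> R / 2"
    using ball_vector_scalar_mult_le[of "R / 2" h] R(1) by auto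
  define u where "u d z = \<phi> (d + z *s h) $ j" for d z
  have near: "eventually (\<lambda>d. d \<in> ball d0 (R / 2)) (at d0)"
    using R(1) by (intro eventually_at_in_open') auto
  have u_der: "(u d has_field_derivative \<phi>' (d + z *s h) h $ j) (at z)"
    if "d \<in> ball d0 (R / 2)" "z \<in> ball 0 r" for d z
  proof -
    have "dist d0 (d + z *s h) \<le> dist d0 d + norm (z *s h)"
      using norm_triangle_ineq4[of "d0 - d" "z *s h"] by (simp add: dist_norm algebra_simps)
    then have "d + z *s h \<in> D" using that small[OF that(2)] R(2) by (auto simp: dist_norm)
    then show ?thesis
      unfolding u_def by (intro has_field_derivative_along_complex_line der clinear)
  qed
  have deriv_u: "deriv (u d) 0 = \<phi>' d h $ j" if "d \<in> ball d0 (R / 2)" for d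
    using u_der[OF that, of 0] \<open>r > 0\<close> by (simp add: DERIV_imp_deriv)
  have "continuous_on D \<phi>"
    using der by (meson has_derivative_continuous continuous_at_imp_continuous_on)
  then have "continuous_on (cball d0 R) (\<lambda>x. \<phi> x $ j)"
    by (intro continuous_on_component continuous_on_subset[OF _ R(2)])
  then have "uniform_limit (ball 0 r) u (u d0) (at d0)"
    unfolding u_def using R(1) small by (rule uniform_limit_translate)
  then have "((\<lambda>d. deriv (u d) 0) \<longlongrightarrow> deriv (u d0) 0) (at d0)"
  proof (rule deriv_complex_uniform_limit)
    show "eventually (\<lambda>d. u d holomorphic_on ball 0 r) (at d0)"
      using near
    proof eventually_elim
      case (elim d)
      show ?case
        unfolding holomorphic_on_open[OF open_ball] by (blast intro: u_der[OF elim])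
    qed
  qed (use \<open>r > 0\<close> in simp_all)
  moreover have "deriv (u d0) 0 = \<phi>' d0 h $ j" using R(1) by (intro deriv_u) simp
  ultimately have "((\<lambda>d. deriv (u d) 0) \<longlongrightarrow> \<phi>' d0 h $ j) (at d0)" by simp
  moreover have "eventually (\<lambda>d. deriv (u d) 0 = \<phi>' d h $ j) (at d0)"
    using near by eventually_elim (rule deriv_u)
  ultimately show "((\<lambda>d. \<phi>' d h $ j) \<longlongrightarrow> \<phi>' d0 h $ j) (at d0)"
    by (rule Lim_transform_eventually)
qed

section \<open>The forms Omega and gamma on C^{2n+2}\<close>

lemma Omega_add_left: "Omega (x + y) z = Omega x z + Omega y z"
  by (simp add: Omega_def algebra_simps sum.distrib sum_subtractf)

lemma Omega_add_right: "Omega z (x + y) = Omega z x + Omega z y"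
  by (simp add: Omega_def algebra_simps sum.distrib sum_subtractf)

lemma Omega_scale_left: "Omega (c *s x) z = c * Omega x z"
  by (simp add: Omega_def algebra_simps sum_distrib_left sum_subtractf)

lemma Omega_scale_right: "Omega z (c *s x) = c * Omega z x"
  by (simp add: Omega_def algebra_simps sum_distrib_left sum_subtractf)

lemma Omega_swap: "Omega x y = - Omega y x"
  by (simp add: Omega_def algebra_simps sum_subtractf)

lemma Omega_self [simp]: "Omega x x = 0"
  by (simp add: Omega_def algebra_simps)

lemma Omega_tau: "Omega (tau x) (tau y) = cnj (Omega x y)"
  by (simp add: Omega_def tau_def)

lemma tau_add: "tau (x + y) = tau x + tau y"
  by (simp add: tau_def vec_eq_iff)

lemma tau_scale: "tau (c *s x) = cnj c *s tau x"
  by (simp add: tau_def vec_eq_iff)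

lemma tendsto_Omega [tendsto_intros]:
  "(u \<longlongrightarrow> u0) F \<Longrightarrow> (w \<longlongrightarrow> w0) F \<Longrightarrow> ((\<lambda>x. Omega (u x) (w x)) \<longlongrightarrow> Omega u0 w0) F"
  unfolding Omega_def by (intro tendsto_intros)

lemma tendsto_gamma [tendsto_intros]:
  "(u \<longlongrightarrow> u0) F \<Longrightarrow> (w \<longlongrightarrow> w0) F \<Longrightarrow> ((\<lambda>x. gamma (u x) (w x)) \<longlongrightarrow> gamma u0 w0) F"
  unfolding gamma_def tau_def by (intro tendsto_intros)

definition xvec :: "complex \<Rightarrow> complex \<Rightarrow> complex^('n::finite + 'n) \<Rightarrow> complex^('n option + 'n option)" where
  "xvec a b v = (\<chi> j. case j of Inl None \<Rightarrow> a | Inr None \<Rightarrow> b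
                               | Inl (Some i) \<Rightarrow> v $ Inl i | Inr (Some i) \<Rightarrow> v $ Inr i)"

definition xtail :: "complex^('n::finite option + 'n option) \<Rightarrow> complex^('n + 'n)" where
  "xtail x = (\<chi> j. case j of Inl i \<Rightarrow> x $ Inl (Some i) | Inr i \<Rightarrow> x $ Inr (Some i))"

lemma xvec_nth [simp]:
  "xvec a b v $ Inl None = a" "xvec a b v $ Inr None = b"
  "xvec a b v $ Inl (Some i) = v $ Inl i" "xvec a b v $ Inr (Some i) = v $ Inr i"
  by (simp_all add: xvec_def)

lemma xtail_xvec [simp]: "xtail (xvec a b v) = v"
  by (simp add: xtail_def vec_eq_iff split: sum.split)

lemma bounded_linear_xtail: "bounded_linear xtail"
proof -
  have "linear xtail" by (rule linearI) (simp_all add: xtail_def vec_eq_iff split: sum.split)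
  then show ?thesis by (simp add: linear_conv_bounded_linear)
qed

lemma xvec_eq_iff: "xvec a b v = xvec a' b' v' \<longleftrightarrow> a = a' \<and> b = b' \<and> v = v'"
  by (metis xvec_nth(1,2) xtail_xvec)

lemma xvec_add: "xvec a b v + xvec a' b' v' = xvec (a + a') (b + b') (v + v')"
  by (simp add: vec_eq_iff xvec_def split: sum.split option.split)

lemma xvec_scale: "c *s xvec a b v = xvec (c * a) (c * b) (c *s v)"
  by (simp add: vec_eq_iff xvec_def split: sum.split option.split)

lemma xvec_zero: "xvec 0 0 0 = 0"
  by (simp add: vec_eq_iff xvec_def split: sum.split option.split)

lemma tau_xvec: "tau (xvec a b v) = xvec (cnj a) (cnj b) (tau v)"
  by (simp add: vec_eq_iff xvec_def tau_def split: sum.split option.split)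

lemma Omega_xvec: "Omega (xvec a b v) (xvec a' b' v') = a * b' - b * a' + Omega v v'"
  by (simp add: Omega_def UNIV_option_conv sum.reindex)

lemma lift_eq_xvec: "lift f q = xvec 1 (f q) q"
  by (simp add: lift_def xvec_def)

lemma has_derivative_xvec:
  fixes v :: "'a::real_normed_vector \<Rightarrow> complex^('n::finite + 'n)"
  assumes "(a has_derivative a') (at x)" "(b has_derivative b') (at x)" "(v has_derivative v') (at x)"
  shows "((\<lambda>x. xvec (a x) (b x) (v x)) has_derivative (\<lambda>h. xvec (a' h) (b' h) (v' h))) (at x)"
proof (rule has_derivative_vec_componentwise)
  fix j :: "'n option + 'n option"
  have "((\<lambda>x. v x $ i) has_derivative (\<lambda>h. v' h $ i)) (at x)" for i
    using bounded_linear.has_derivative[OF bounded_linear_vec_nth assms(3)] .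
  then show "((\<lambda>x. xvec (a x) (b x) (v x) $ j) has_derivative (\<lambda>h. xvec (a' h) (b' h) (v' h) $ j)) (at x)"
    using assms(1,2) by (cases j rule: sum.exhaust; rename_tac k; case_tac k) auto
qed

lemma has_derivative_vector_scalar_mult:
  fixes v :: "'a::real_normed_vector \<Rightarrow> complex^'m::finite"
  assumes "(c has_derivative c') (at x)" "(v has_derivative v') (at x)"
  shows "((\<lambda>x. c x *s v x) has_derivative (\<lambda>h. c' h *s v x + c x *s v' h)) (at x)"
proof (rule has_derivative_vec_componentwise)
  fix j
  have "((\<lambda>x. v x $ j) has_derivative (\<lambda>h. v' h $ j)) (at x)"
    using bounded_linear.has_derivative[OF bounded_linear_vec_nth assms(2)] .
  from has_derivative_mult[OF assms(1) this]
  show "((\<lambda>x. (c x *s v x) $ j) has_derivative (\<lambda>h. (c' h *s v x + c x *s v' h) $ j)) (at x)"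
    by (simp add: algebra_simps)
qed

lemma tendsto_vector_scalar_mult [tendsto_intros]:
  fixes v :: "'b \<Rightarrow> 'a::real_normed_field^'m::finite"
  shows "(c \<longlongrightarrow> c0) F \<Longrightarrow> (v \<longlongrightarrow> v0) F \<Longrightarrow> ((\<lambda>x. c x *s v x) \<longlongrightarrow> c0 *s v0) F"
  unfolding vector_scalar_mult_def by (intro tendsto_intros)

lemma tendsto_xvec [tendsto_intros]:
  fixes v :: "'c \<Rightarrow> complex^('n::finite + 'n)"
  assumes "(a \<longlongrightarrow> a0) F" "(b \<longlongrightarrow> b0) F" "(v \<longlongrightarrow> v0) F"
  shows "((\<lambda>x. xvec (a x) (b x) (v x)) \<longlongrightarrow> xvec a0 b0 v0) F"
  unfolding xvec_def using assms
  by (intro tendsto_vec_lambda) (auto intro!: tendsto_intros split: sum.split option.split)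

section \<open>The cone chart\<close>

text \<open>Parameters of the cone live in C^{n+1} = complex^('n option); None is the radial coordinate.\<close>
definition vcons :: "complex \<Rightarrow> complex^'n \<Rightarrow> complex^('n::finite option)" where
  "vcons c d = (\<chi> j. case j of None \<Rightarrow> c | Some i \<Rightarrow> d $ i)"

definition vtail :: "complex^('n::finite option) \<Rightarrow> complex^'n" where
  "vtail e = (\<chi> i. e $ Some i)"

lemma vcons_nth [simp]: "vcons c d $ None = c" "vcons c d $ Some i = d $ i"
  by (simp_all add: vcons_def)

lemma vtail_nth [simp]: "vtail e $ i = e $ Some i"
  by (simp add: vtail_def)

lemma vtail_vcons [simp]: "vtail (vcons c d) = d"
  by (simp add: vec_eq_iff)

lemma vcons_vtail: "vcons (e $ None) (vtail e) = e"
  by (simp add: vec_eq_iff vcons_def split: option.split)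

lemma vcons_zero: "vcons 0 0 = 0"
  by (simp add: vec_eq_iff vcons_def split: option.split)

lemma vtail_add: "vtail (x + y) = vtail x + vtail y"
  by (simp add: vec_eq_iff)

lemma vtail_scale: "vtail (c *s x) = c *s vtail x"
  by (simp add: vec_eq_iff)

lemma bounded_linear_vtail: "bounded_linear vtail"
proof -
  have "linear vtail" by (rule linearI) (simp_all add: vec_eq_iff)
  then show ?thesis by (simp add: linear_conv_bounded_linear)
qed

lemma continuous_on_vcons [continuous_intros]:
  assumes "continuous_on S a" "continuous_on S d"
  shows "continuous_on S (\<lambda>x. vcons (a x) (d x))"
  unfolding vcons_def
proof (rule continuous_on_vec_lambda)
  fix i
  show "continuous_on S (\<lambda>x. case i of None \<Rightarrow> a x | Some k \<Rightarrow> d x $ k)"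
    using assms by (cases i) (auto intro: continuous_intros)
qed

definition cone_domain :: "(complex^'n) set \<Rightarrow> (complex^('n::finite option)) set" where
  "cone_domain B = {e. e $ None \<noteq> 0 \<and> vtail e \<in> B}"

definition cone_map ::
  "(complex^('n::finite + 'n) \<Rightarrow> complex) \<Rightarrow> (complex^'n \<Rightarrow> complex^('n + 'n))
     \<Rightarrow> complex^('n option) \<Rightarrow> complex^('n option + 'n option)" where
  "cone_map f \<phi> e = e $ None *s lift f (\<phi> (vtail e))"

text \<open>Along a tangent vector v of L at p, lift f moves with velocity (0, - Omega p v, v),
  because df = - eta on L.\<close>
definition cone_deriv ::
  "(complex^('n::finite + 'n) \<Rightarrow> complex) \<Rightarrow> (complex^'n \<Rightarrow> complex^('n + 'n))
     \<Rightarrow> (complex^'n \<Rightarrow> complex^'n \<Rightarrow> complex^('n + 'n))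
     \<Rightarrow> complex^('n option) \<Rightarrow> complex^('n option) \<Rightarrow> complex^('n option + 'n option)" where
  "cone_deriv f \<phi> \<phi>' e k =
     k $ None *s lift f (\<phi> (vtail e)) +
     e $ None *s xvec 0 (- Omega (\<phi> (vtail e)) (\<phi>' (vtail e) (vtail k))) (\<phi>' (vtail e) (vtail k))"

lemma cone_deriv_eq_xvec:
  "cone_deriv f \<phi> \<phi>' e k =
     xvec (k $ None) (k $ None * f (\<phi> (vtail e)) - e $ None * Omega (\<phi> (vtail e)) (\<phi>' (vtail e) (vtail k)))
       (k $ None *s \<phi> (vtail e) + e $ None *s \<phi>' (vtail e) (vtail k))"
  by (simp add: cone_deriv_def lift_eq_xvec xvec_scale xvec_add)

lemma cone_map_image: "cone_map f \<phi> ` cone_domain B = con (\<phi> ` B) f"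
proof
  show "cone_map f \<phi> ` cone_domain B \<subseteq> con (\<phi> ` B) f"
    by (auto simp: cone_domain_def con_def cone_map_def)
  show "con (\<phi> ` B) f \<subseteq> cone_map f \<phi> ` cone_domain B"
  proof
    fix x assume "x \<in> con (\<phi> ` B) f"
    then obtain c d where "c \<noteq> 0" "d \<in> B" "x = c *s lift f (\<phi> d)" by (auto simp: con_def)
    then show "x \<in> cone_map f \<phi> ` cone_domain B"
      by (intro image_eqI[of _ _ "vcons c d"]) (auto simp: cone_map_def cone_domain_def)
  qed
qed

lemma inj_on_cone_map:
  assumes "inj_on \<phi> B"
  shows "inj_on (cone_map f \<phi>) (cone_domain B)"
proof
  fix e e' assume e: "e \<in> cone_domain B" "e' \<in> cone_domain B"
    and eq: "cone_map f \<phi> e = cone_map f \<phi> e'"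
  have radial: "e $ None = e' $ None"
    using arg_cong[OF eq, of "\<lambda>x. x $ Inl None"] by (simp add: cone_map_def lift_eq_xvec)
  moreover have "e $ None *s \<phi> (vtail e) = e $ None *s \<phi> (vtail e')"
    using arg_cong[OF eq, of xtail] radial by (simp add: cone_map_def lift_eq_xvec xvec_scale)
  ultimately have "vtail e = vtail e'"
    using e assms by (auto simp: cone_domain_def inj_on_def)
  have "e = vcons (e $ None) (vtail e)" by (rule vcons_vtail[symmetric])
  also have "\<dots> = vcons (e' $ None) (vtail e')" by (simp only: radial \<open>vtail e = vtail e'\<close>)
  also have "\<dots> = e'" by (rule vcons_vtail)
  finally show "e = e'" .
qed

lemma open_cone_domain:
  assumes "open B"
  shows "open (cone_domain B)"
proof -
  have "cone_domain B = {e. e $ None \<noteq> 0} \<inter> vtail -` B"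
    by (auto simp: cone_domain_def)
  moreover have "open {e::complex^('n::finite option). e $ None \<noteq> 0}"
    by (intro open_Collect_neq continuous_intros)
  moreover have "open (vtail -` B)"
    using continuous_open_vimage[OF assms] bounded_linear_vtail linear_continuous_at by blast
  ultimately show ?thesis by auto
qed

lemma continuous_on_inv_cone_map:
  fixes \<phi> :: "complex^'n::finite \<Rightarrow> complex^('n + 'n)"
  assumes inj: "inj_on \<phi> B" and inv_cont: "continuous_on (\<phi> ` B) (inv_into B \<phi>)"
  shows "continuous_on (con (\<phi> ` B) f) (inv_into (cone_domain B) (cone_map f \<phi>))"
proof -
  define radial where "radial x = x $ Inl None" for x :: "complex^('n option + 'n option)"
  define base where "base x = inverse (radial x) *s xtail x" for x
  have con_elem: "radial x \<noteq> 0 \<and> base x \<in> \<phi> ` B \<and>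
      inv_into (cone_domain B) (cone_map f \<phi>) x = vcons (radial x) (inv_into B \<phi> (base x))"
    if "x \<in> con (\<phi> ` B) f" for x
  proof -
    from that obtain c d where cd: "c \<noteq> 0" "d \<in> B" "x = cone_map f \<phi> (vcons c d)"
      by (auto simp: con_def cone_map_def)
    then have "vcons c d \<in> cone_domain B" by (simp add: cone_domain_def)
    moreover have "radial x = c" "base x = \<phi> d"
      using cd by (simp_all add: radial_def base_def cone_map_def lift_eq_xvec xvec_scale vector_smult_assoc)
    ultimately show ?thesis
      using cd inj inj_on_cone_map[OF inj] by (simp add: inv_into_f_f)
  qed
  then have radial_nz: "\<And>x. x \<in> con (\<phi> ` B) f \<Longrightarrow> radial x \<noteq> 0"
    and base_in: "base ` con (\<phi> ` B) f \<subseteq> \<phi> ` B"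
    and inv_eq: "\<And>x. x \<in> con (\<phi> ` B) f \<Longrightarrow>
      vcons (radial x) (inv_into B \<phi> (base x)) = inv_into (cone_domain B) (cone_map f \<phi>) x"
    by auto
  have "continuous_on (con (\<phi> ` B) f) base"
    unfolding base_def vector_scalar_mult_def
    by (intro continuous_on_vec_lambda continuous_on_mult continuous_on_inverse
        continuous_on_component linear_continuous_on[OF bounded_linear_xtail])
      (use radial_nz in \<open>auto simp: radial_def intro: continuous_on_component continuous_on_id\<close>)
  then have "continuous_on (con (\<phi> ` B) f) (\<lambda>x. vcons (radial x) (inv_into B \<phi> (base x)))"
    unfolding radial_def
    by (intro continuous_on_vcons continuous_on_compose2[OF inv_cont _ base_in] continuous_intros)
  then show ?thesis
    by (rule continuous_on_eq) (rule inv_eq)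
qed

lemma cone_map_has_derivative:
  fixes \<phi> :: "complex^'n::finite \<Rightarrow> complex^('n + 'n)"
  assumes lp: "lagrangian_pair L f" and chart: "cchart L W D \<phi> \<phi>'" and e: "vtail e \<in> D"
  shows "(cone_map f \<phi> has_derivative cone_deriv f \<phi> \<phi>' e) (at e)"
proof -
  have vtail_der: "(vtail has_derivative vtail) (at e)"
    by (rule bounded_linear_imp_has_derivative[OF bounded_linear_vtail])
  have "((f \<circ> \<phi>) has_derivative (\<lambda>h. - Omega (\<phi> (vtail e)) (\<phi>' (vtail e) h))) (at (vtail e))"
    using lp chart e unfolding lagrangian_pair_def by blast
  from has_derivative_compose[OF vtail_der this]
  have f_der: "((\<lambda>x. f (\<phi> (vtail x))) has_derivative
      (\<lambda>k. - Omega (\<phi> (vtail e)) (\<phi>' (vtail e) (vtail k)))) (at e)"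
    by (simp add: o_def)
  have "(\<phi> has_derivative \<phi>' (vtail e)) (at (vtail e))"
    using chart e by (simp add: cchart_def)
  from has_derivative_compose[OF vtail_der this]
  have \<phi>_der: "((\<lambda>x. \<phi> (vtail x)) has_derivative (\<lambda>k. \<phi>' (vtail e) (vtail k))) (at e)"
    by (simp add: o_def)
  have "((\<lambda>x. lift f (\<phi> (vtail x))) has_derivative
      (\<lambda>k. xvec 0 (- Omega (\<phi> (vtail e)) (\<phi>' (vtail e) (vtail k))) (\<phi>' (vtail e) (vtail k)))) (at e)"
    unfolding lift_eq_xvec by (rule has_derivative_xvec[OF has_derivative_const f_der \<phi>_der])
  from has_derivative_vector_scalar_mult[OF bounded_linear_imp_has_derivative[OF bounded_linear_vec_nth] this]
  show ?thesis
    unfolding cone_map_def cone_deriv_def .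
qed

lemma cone_deriv_linear:
  assumes chart: "cchart L W D \<phi> \<phi>'" and e: "vtail e \<in> D"
  shows "Vector_Spaces.linear (*s) (*s) (cone_deriv f \<phi> \<phi>' e)"
proof -
  interpret \<phi>': Vector_Spaces.linear "(*s)" "(*s)" "\<phi>' (vtail e)"
    using cchart_derivative_linear[OF chart e] .
  show ?thesis
    by (rule vec_linearI)
      (simp_all add: cone_deriv_def vtail_add vtail_scale \<phi>'.add \<phi>'.scale Omega_add_right
        Omega_scale_right xvec_add xvec_scale vector_add_ldistrib vector_sadd_rdistrib
        vector_smult_assoc algebra_simps)
qed

lemma inj_cone_deriv:
  assumes chart: "cchart L W D \<phi> \<phi>'" and e: "e \<in> cone_domain D"
  shows "inj (cone_deriv f \<phi> \<phi>' e)"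
proof -
  have e0: "e $ None \<noteq> 0" and d: "vtail e \<in> D" using e by (auto simp: cone_domain_def)
  have inj_\<phi>': "inj (\<phi>' (vtail e))" using chart d by (simp add: cchart_def)
  interpret \<phi>': Vector_Spaces.linear "(*s)" "(*s)" "\<phi>' (vtail e)"
    using cchart_derivative_linear[OF chart d] .
  show ?thesis
    unfolding vec.linear_inj_iff_eq_0[OF cone_deriv_linear[OF chart d]]
  proof (intro allI impI)
    fix k assume "cone_deriv f \<phi> \<phi>' e k = 0"
    then have "xvec (k $ None) (k $ None * f (\<phi> (vtail e)) - e $ None * Omega (\<phi> (vtail e)) (\<phi>' (vtail e) (vtail k)))
      (k $ None *s \<phi> (vtail e) + e $ None *s \<phi>' (vtail e) (vtail k)) = xvec 0 0 0"
      by (simp add: cone_deriv_eq_xvec xvec_zero)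
    then have k0: "k $ None = 0" and "e $ None *s \<phi>' (vtail e) (vtail k) = 0"
      unfolding xvec_eq_iff by auto
    then have "\<phi>' (vtail e) (vtail k) = 0" using e0 by simp
    then have "vtail k = 0" using inj_\<phi>' \<phi>'.inj_iff_eq_0 by blast
    have "k = vcons (k $ None) (vtail k)" by (rule vcons_vtail[symmetric])
    then show "k = 0" by (simp only: k0 \<open>vtail k = 0\<close> vcons_zero)
  qed
qed

lemma cchart_cone:
  fixes \<phi> :: "complex^'n::finite \<Rightarrow> complex^('n + 'n)"
  assumes lp: "lagrangian_pair L f" and chart: "cchart L W D \<phi> \<phi>'"
    and "open B" and "B \<subseteq> D"
  shows "cchart (con (\<phi> ` B) f) UNIV (cone_domain B) (cone_map f \<phi>) (cone_deriv f \<phi> \<phi>')"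
proof -
  have "cchart (\<phi> ` B) W B \<phi> \<phi>'" by (rule cchart_restrict[OF chart \<open>open B\<close> \<open>B \<subseteq> D\<close>])
  then have inj: "inj_on \<phi> B" and inv_cont: "continuous_on (\<phi> ` B \<inter> W) (inv_into B \<phi>)"
    and image_B: "\<phi> ` B = \<phi> ` B \<inter> W"
    unfolding cchart_def by blast+
  have inv_cont': "continuous_on (\<phi> ` B) (inv_into B \<phi>)"
    using inv_cont by (subst image_B)
  have dom: "vtail e \<in> D" "e \<in> cone_domain D" if "e \<in> cone_domain B" for e
    using that \<open>B \<subseteq> D\<close> by (auto simp: cone_domain_def)
  have "\<forall>e\<in>cone_domain B. (cone_map f \<phi> has_derivative cone_deriv f \<phi> \<phi>' e) (at e) \<and>
      inj (cone_deriv f \<phi> \<phi>' e) \<and> (\<forall>c k. cone_deriv f \<phi> \<phi>' e (c *s k) = c *s cone_deriv f \<phi> \<phi>' e k)"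
    using cone_map_has_derivative[OF lp chart dom(1)] inj_cone_deriv[OF chart dom(2)]
      vec.linear_scale[OF cone_deriv_linear[OF chart dom(1)]] by blast
  then show ?thesis
    unfolding cchart_def Int_UNIV_right cone_map_image
    using open_cone_domain[OF \<open>open B\<close>] inj_on_cone_map[OF inj]
      continuous_on_inv_cone_map[OF inj inv_cont'] by (intro conjI open_UNIV refl)
qed

lemma Omega_cone_deriv:
  "Omega (cone_deriv f \<phi> \<phi>' e k) (cone_deriv f \<phi> \<phi>' e l) =
     (e $ None)^2 * Omega (\<phi>' (vtail e) (vtail k)) (\<phi>' (vtail e) (vtail l))"
proof -
  define p u v where "p = \<phi> (vtail e)" and "u = \<phi>' (vtail e) (vtail k)" and "v = \<phi>' (vtail e) (vtail l)"
  have "Omega u p = - Omega p u" "Omega v p = - Omega p v" by (simp_all only: Omega_swap[of _ p])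
  then show ?thesis
    unfolding cone_deriv_eq_xvec p_def[symmetric] u_def[symmetric] v_def[symmetric] Omega_xvec
    by (simp add: Omega_add_left Omega_add_right Omega_scale_left Omega_scale_right)
      (simp add: power2_eq_square algebra_simps)
qed

lemma complex_lagrangian_cone:
  fixes \<phi> :: "complex^'n::finite \<Rightarrow> complex^('n + 'n)"
  assumes lp: "lagrangian_pair L f" and chart: "cchart L W D \<phi> \<phi>'"
    and "open B" and "B \<subseteq> D"
  shows "complex_lagrangian (con (\<phi> ` B) f)"
proof -
  have chart_cone: "cchart (con (\<phi> ` B) f) UNIV (cone_domain B) (cone_map f \<phi>) (cone_deriv f \<phi> \<phi>')"
    by (rule cchart_cone[OF lp chart \<open>open B\<close> \<open>B \<subseteq> D\<close>])
  have isotropic: "\<And>p u v. p \<in> L \<Longrightarrow> u \<in> tangent_space L p \<Longrightarrow> v \<in> tangent_space L p \<Longrightarrow> Omega u v = 0"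
    using lp unfolding lagrangian_pair_def complex_lagrangian_def by blast
  have "Omega u v = 0"
    if "p \<in> con (\<phi> ` B) f" "u \<in> tangent_space (con (\<phi> ` B) f) p" "v \<in> tangent_space (con (\<phi> ` B) f) p"
    for p u v
  proof -
    from that(1) obtain e where e: "e \<in> cone_domain B" "p = cone_map f \<phi> e"
      unfolding cone_map_image[symmetric] by blast
    then have d: "vtail e \<in> D" using \<open>B \<subseteq> D\<close> by (auto simp: cone_domain_def)
    from that(2,3) obtain k l where "u = cone_deriv f \<phi> \<phi>' e k" "v = cone_deriv f \<phi> \<phi>' e l"
      using tangent_space_chart[OF chart_cone e(1)] e(2) by auto
    moreover have "\<phi> (vtail e) \<in> L" using chart d by (auto simp: cchart_def)
    ultimately show ?thesis
      using isotropic chart_derivative_in_tangent_space[OF chart d] by (simp add: Omega_cone_deriv)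
  qed
  moreover have "csubmanifold TYPE('n option) (con (\<phi> ` B) f)"
    unfolding csubmanifold_def using chart_cone by blast
  ultimately show ?thesis
    unfolding complex_lagrangian_def by blast
qed

section \<open>Gram determinants of gamma\<close>

lemma gamma_add_left: "gamma (x + y) z = gamma x z + gamma y z"
  by (simp add: gamma_def Omega_add_left algebra_simps)

lemma gamma_scale_left: "gamma (c *s x) z = c * gamma x z"
  by (simp add: gamma_def Omega_scale_left)

lemma gamma_add_right: "gamma z (x + y) = gamma z x + gamma z y"
  by (simp add: gamma_def tau_add Omega_add_right algebra_simps)

lemma gamma_scale_right: "gamma z (c *s x) = cnj c * gamma z x"
  by (simp add: gamma_def tau_scale Omega_scale_right)

lemma gamma_zero [simp]: "gamma 0 z = 0" "gamma z 0 = 0"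
  by (simp_all add: gamma_def Omega_def tau_def)

lemma gamma_sum_left: "gamma (\<Sum>i\<in>A. u i) z = (\<Sum>i\<in>A. gamma (u i) z)"
  by (induction A rule: infinite_finite_induct) (simp_all add: gamma_add_left)

lemma gamma_sum_right: "gamma z (\<Sum>i\<in>A. u i) = (\<Sum>i\<in>A. gamma z (u i))"
  by (induction A rule: infinite_finite_induct) (simp_all add: gamma_add_right)

lemma vec_linear_basis_expansion:
  assumes "Vector_Spaces.linear (*s) (*s) T"
  shows "T x = (\<Sum>i\<in>UNIV. x $ i *s T (axis i 1))"
proof -
  have "T x = T (\<Sum>i\<in>UNIV. x $ i *s axis i 1)" by (simp only: basis_expansion)
  also have "\<dots> = (\<Sum>i\<in>UNIV. x $ i *s T (axis i 1))"
    by (simp add: vec.linear_sum[OF assms] vec.linear_scale[OF assms])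
  finally show ?thesis .
qed

definition gram :: "(complex^'m::finite \<Rightarrow> complex^('k::finite + 'k)) \<Rightarrow> complex^'m^'m" where
  "gram T = (\<chi> j i. gamma (T (axis i 1)) (T (axis j 1)))"

lemma gram_mult_eq:
  assumes "Vector_Spaces.linear (*s) (*s) T"
  shows "(gram T *v x) $ j = gamma (T x) (T (axis j 1))"
  by (subst vec_linear_basis_expansion[OF assms])
    (simp add: gram_def matrix_vector_mult_def gamma_sum_left gamma_scale_left mult.commute)

lemma gram_mult_eq_0_iff:
  assumes "Vector_Spaces.linear (*s) (*s) T"
  shows "gram T *v x = 0 \<longleftrightarrow> (\<forall>y. gamma (T x) (T y) = 0)"
proof
  assume "gram T *v x = 0"
  then have "gamma (T x) (T (axis j 1)) = 0" for j
    using gram_mult_eq[OF assms, of x j] by simp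
  then show "\<forall>y. gamma (T x) (T y) = 0"
    by (subst vec_linear_basis_expansion[OF assms]) (simp add: gamma_sum_right gamma_scale_right)
qed (simp add: vec_eq_iff gram_mult_eq[OF assms])

lemma det_gram_nonzero_iff:
  assumes lin: "Vector_Spaces.linear (*s) (*s) T"
  shows "det (gram T) \<noteq> 0 \<longleftrightarrow> inj T \<and> nondegenerate_on gamma (range T)"
proof -
  have "det (gram T) \<noteq> 0 \<longleftrightarrow> (\<forall>x. gram T *v x = 0 \<longrightarrow> x = 0)"
    using det_nz_iff_inj_gen[OF matrix_vector_mul_linear_gen, of "gram T"]
    by (simp add: matrix_of_matrix_vector_mul vec.linear_inj_iff_eq_0[OF matrix_vector_mul_linear_gen])
  also have "\<dots> \<longleftrightarrow> (\<forall>x. (\<forall>y. gamma (T x) (T y) = 0) \<longrightarrow> x = 0)"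
    by (simp add: gram_mult_eq_0_iff[OF lin])
  also have "\<dots> \<longleftrightarrow> inj T \<and> nondegenerate_on gamma (range T)"
    unfolding nondegenerate_on_def vec.linear_inj_iff_eq_0[OF lin]
    by (auto simp: gamma_def Omega_def vec.linear_0[OF lin])
  finally show ?thesis .
qed

lemma tendsto_det_gram:
  assumes "\<And>v. ((\<lambda>x. T x v) \<longlongrightarrow> T0 v) F"
  shows "((\<lambda>x. det (gram (T x))) \<longlongrightarrow> det (gram T0)) F"
  unfolding det_def gram_def by (intro tendsto_intros assms)

section \<open>The Kaehler condition near a real point\<close>

lemma gamma_cone_deriv_real:
  assumes real: "tau (\<phi> (vtail e)) = \<phi> (vtail e)"
  shows "gamma (cone_deriv f \<phi> \<phi>' e k) (cone_deriv f \<phi> \<phi>' e l) =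
    \<i> * (k $ None * cnj (l $ None) * (cnj (f (\<phi> (vtail e))) - f (\<phi> (vtail e))))
      + e $ None * cnj (e $ None) * gamma (\<phi>' (vtail e) (vtail k)) (\<phi>' (vtail e) (vtail l))"
proof -
  define p u v where "p = \<phi> (vtail e)" and "u = \<phi>' (vtail e) (vtail k)" and "v = \<phi>' (vtail e) (vtail l)"
  have tau_p: "tau p = p" using real by (simp add: p_def)
  have "Omega u p = - Omega p u" by (simp only: Omega_swap[of _ p])
  moreover have "Omega p (tau v) = cnj (Omega p v)"
    using Omega_tau[of p v] tau_p by simp
  ultimately show ?thesis
    unfolding cone_deriv_eq_xvec p_def[symmetric] u_def[symmetric] v_def[symmetric] gamma_def
      tau_xvec Omega_xvec
    by (simp add: tau_add tau_scale tau_p Omega_add_left Omega_add_right Omega_scale_left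
        Omega_scale_right)
      (simp add: algebra_simps)
qed

lemma cone_deriv_normalize:
  assumes chart: "cchart L W D \<phi> \<phi>'" and d: "vtail e \<in> D"
  shows "cone_deriv f \<phi> \<phi>' e k = cone_deriv f \<phi> \<phi>' (vcons 1 (vtail e)) (vcons (k $ None) (e $ None *s vtail k))"
proof -
  have "\<phi>' (vtail e) (e $ None *s vtail k) = e $ None *s \<phi>' (vtail e) (vtail k)"
    using chart d by (simp add: cchart_def)
  then show ?thesis by (simp add: cone_deriv_eq_xvec Omega_scale_right)
qed

lemma range_cone_deriv_normalize:
  fixes \<phi> :: "complex^'n::finite \<Rightarrow> complex^('n + 'n)"
  assumes chart: "cchart L W D \<phi> \<phi>'" and e: "e \<in> cone_domain D"
  shows "range (cone_deriv f \<phi> \<phi>' e) = range (cone_deriv f \<phi> \<phi>' (vcons 1 (vtail e)))"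
proof -
  have e0: "e $ None \<noteq> 0" and d: "vtail e \<in> D" using e by (auto simp: cone_domain_def)
  define g where "g k = vcons (k $ None) (e $ None *s vtail k)" for k :: "complex^'n option"
  have "surj g"
    unfolding surj_def
  proof
    fix k :: "complex^'n option"
    have "k = vcons (k $ None) (vtail k)" by (rule vcons_vtail[symmetric])
    also have "\<dots> = g (vcons (k $ None) (inverse (e $ None) *s vtail k))"
      using e0 by (simp add: g_def vector_smult_assoc)
    finally show "\<exists>x. k = g x" ..
  qed
  moreover have "cone_deriv f \<phi> \<phi>' e = cone_deriv f \<phi> \<phi>' (vcons 1 (vtail e)) \<circ> g"
    using cone_deriv_normalize[OF chart d] by (simp add: fun_eq_iff g_def)
  ultimately show ?thesis by (metis image_comp)
qed

lemma kaehlerian_cone: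
  fixes \<phi> :: "complex^'n::finite \<Rightarrow> complex^('n + 'n)"
  assumes lp: "lagrangian_pair L f" and chart: "cchart L W D \<phi> \<phi>'"
    and "open B" and "B \<subseteq> D"
    and gram_nz: "\<And>d. d \<in> B \<Longrightarrow> det (gram (cone_deriv f \<phi> \<phi>' (vcons 1 d))) \<noteq> 0"
  shows "kaehlerian (con (\<phi> ` B) f)"
  unfolding kaehlerian_def
proof
  fix p assume "p \<in> con (\<phi> ` B) f"
  then obtain e where e: "e \<in> cone_domain B" "p = cone_map f \<phi> e"
    unfolding cone_map_image[symmetric] by blast
  then have d: "vtail e \<in> B" "vtail e \<in> D" and e_D: "e \<in> cone_domain D"
    using \<open>B \<subseteq> D\<close> by (auto simp: cone_domain_def)
  have "tangent_space (con (\<phi> ` B) f) p = range (cone_deriv f \<phi> \<phi>' (vcons 1 (vtail e)))"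
    using tangent_space_chart[OF cchart_cone[OF lp chart \<open>open B\<close> \<open>B \<subseteq> D\<close>] e(1)] e(2)
      range_cone_deriv_normalize[OF chart e_D] by simp
  moreover have "Vector_Spaces.linear (*s) (*s) (cone_deriv f \<phi> \<phi>' (vcons 1 (vtail e)))"
    using cone_deriv_linear[OF chart] d(2) by simp
  ultimately show "nondegenerate_on gamma (tangent_space (con (\<phi> ` B) f) p)"
    using det_gram_nonzero_iff gram_nz[OF d(1)] by auto
qed

lemma nondegenerate_cone_tangent_at_real_point:
  fixes \<phi> :: "complex^'n::finite \<Rightarrow> complex^('n + 'n)"
  assumes kaehler: "kaehlerian L" and chart: "cchart L W D \<phi> \<phi>'" and "d0 \<in> D"
    and real: "tau (\<phi> d0) = \<phi> d0" and nonreal: "f (\<phi> d0) \<notin> \<real>"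
  shows "nondegenerate_on gamma (range (cone_deriv f \<phi> \<phi>' (vcons 1 d0)))"
  unfolding nondegenerate_on_def
proof (intro ballI impI)
  let ?T = "cone_deriv f \<phi> \<phi>' (vcons 1 d0)"
  interpret \<phi>': Vector_Spaces.linear "(*s)" "(*s)" "\<phi>' d0"
    using cchart_derivative_linear[OF chart \<open>d0 \<in> D\<close>] .
  have form: "gamma (?T x) (?T y) =
      \<i> * (x $ None * cnj (y $ None) * (cnj (f (\<phi> d0)) - f (\<phi> d0)))
        + gamma (\<phi>' d0 (vtail x)) (\<phi>' d0 (vtail y))" for x y
    using gamma_cone_deriv_real[of \<phi> "vcons 1 d0" f \<phi>' x y] real by simp
  fix v assume "v \<in> range ?T" and orth: "\<forall>u\<in>range ?T. gamma v u = 0"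
  then obtain x where v: "v = ?T x" by blast
  have "cnj (f (\<phi> d0)) - f (\<phi> d0) \<noteq> 0"
    using nonreal Reals_cnj_iff by force
  \<comment> \<open>pairing with the radial vector isolates the coefficient cnj (f (phi d0)) - f (phi d0)\<close>
  then have radial: "x $ None = 0"
    using form[of x "vcons 1 0"] orth v by (simp add: \<phi>'.zero)
  have "gamma (\<phi>' d0 (vtail x)) w = 0" if "w \<in> tangent_space L (\<phi> d0)" for w
  proof -
    from that obtain h where "w = \<phi>' d0 h"
      using tangent_space_chart[OF chart \<open>d0 \<in> D\<close>] by auto
    then show ?thesis using form[of x "vcons 0 h"] orth v radial by simp
  qed
  moreover have "\<phi> d0 \<in> L" using chart \<open>d0 \<in> D\<close> by (auto simp: cchart_def)
  ultimately have "\<phi>' d0 (vtail x) = 0"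
    using kaehler chart_derivative_in_tangent_space[OF chart \<open>d0 \<in> D\<close>]
    unfolding kaehlerian_def nondegenerate_on_def by blast
  then show "v = 0"
    using v radial by (simp add: cone_deriv_eq_xvec xvec_zero Omega_def)
qed

lemma det_gram_cone_deriv_nonzero:
  fixes \<phi> :: "complex^'n::finite \<Rightarrow> complex^('n + 'n)"
  assumes kaehler: "kaehlerian L" and chart: "cchart L W D \<phi> \<phi>'" and "d0 \<in> D"
    and real: "tau (\<phi> d0) = \<phi> d0" and nonreal: "f (\<phi> d0) \<notin> \<real>"
  shows "det (gram (cone_deriv f \<phi> \<phi>' (vcons 1 d0))) \<noteq> 0"
proof -
  have "Vector_Spaces.linear (*s) (*s) (cone_deriv f \<phi> \<phi>' (vcons 1 d0))"
    using cone_deriv_linear[OF chart] \<open>d0 \<in> D\<close> by simp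
  moreover have "inj (cone_deriv f \<phi> \<phi>' (vcons 1 d0))"
    using inj_cone_deriv[OF chart] \<open>d0 \<in> D\<close> by (simp add: cone_domain_def)
  ultimately show ?thesis
    using det_gram_nonzero_iff
      nondegenerate_cone_tangent_at_real_point[OF kaehler chart \<open>d0 \<in> D\<close> real, of f] nonreal
    by blast
qed

lemma tendsto_cone_deriv:
  fixes \<phi> :: "complex^'n::finite \<Rightarrow> complex^('n + 'n)"
  assumes lp: "lagrangian_pair L f" and chart: "cchart L W D \<phi> \<phi>'" and "d0 \<in> D"
  shows "((\<lambda>d. cone_deriv f \<phi> \<phi>' (vcons 1 d) k) \<longlongrightarrow> cone_deriv f \<phi> \<phi>' (vcons 1 d0) k) (at d0)"
proof -
  have "open D" and der: "\<And>d. d \<in> D \<Longrightarrow> (\<phi> has_derivative \<phi>' d) (at d)"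
    and clinear: "\<And>d c h. d \<in> D \<Longrightarrow> \<phi>' d (c *s h) = c *s \<phi>' d h"
    using chart by (auto simp: cchart_def)
  have "isCont \<phi> d0" using der[OF \<open>d0 \<in> D\<close>] by (rule has_derivative_continuous)
  moreover have "isCont (f \<circ> \<phi>) d0"
    using lp chart \<open>d0 \<in> D\<close> unfolding lagrangian_pair_def by (blast intro: has_derivative_continuous)
  moreover have "((\<lambda>d. \<phi>' d (vtail k)) \<longlongrightarrow> \<phi>' d0 (vtail k)) (at d0)"
    using \<open>open D\<close> \<open>d0 \<in> D\<close> der clinear by (rule complex_derivative_tendsto)
  ultimately show ?thesis
    unfolding cone_deriv_eq_xvec vcons_nth vtail_vcons isCont_def o_def
    by (intro tendsto_intros)
qed

lemma ball_det_gram_cone_deriv_nonzero: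
  fixes \<phi> :: "complex^'n::finite \<Rightarrow> complex^('n + 'n)"
  assumes lp: "lagrangian_pair L f" and kaehler: "kaehlerian L" and chart: "cchart L W D \<phi> \<phi>'"
    and "d0 \<in> D" and "tau (\<phi> d0) = \<phi> d0" and "f (\<phi> d0) \<notin> \<real>"
  obtains r where "r > 0" and "ball d0 r \<subseteq> D"
    and "\<And>d. d \<in> ball d0 r \<Longrightarrow> det (gram (cone_deriv f \<phi> \<phi>' (vcons 1 d))) \<noteq> 0"
proof -
  let ?G = "\<lambda>d. det (gram (cone_deriv f \<phi> \<phi>' (vcons 1 d)))"
  have G0: "?G d0 \<noteq> 0"
    using det_gram_cone_deriv_nonzero[OF kaehler chart] assms(4-6) by blast
  have "(?G \<longlongrightarrow> ?G d0) (at d0)"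
    using tendsto_cone_deriv[OF lp chart \<open>d0 \<in> D\<close>] by (rule tendsto_det_gram)
  then have "eventually (\<lambda>d. ?G d \<noteq> 0) (at d0)"
    using G0 by (rule tendsto_imp_eventually_ne)
  then have "eventually (\<lambda>d. d \<noteq> d0 \<longrightarrow> ?G d \<noteq> 0) (nhds d0)"
    by (simp add: eventually_at_filter)
  then have "eventually (\<lambda>d. ?G d \<noteq> 0) (nhds d0)"
    by eventually_elim (use G0 in auto)
  then obtain r1 where "r1 > 0" and r1: "\<And>d. dist d d0 < r1 \<Longrightarrow> ?G d \<noteq> 0"
    unfolding eventually_nhds_metric by blast
  have "open D" using chart by (simp add: cchart_def)
  then obtain r2 where "r2 > 0" and "ball d0 r2 \<subseteq> D"
    using \<open>d0 \<in> D\<close> open_contains_ball by blast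
  show thesis
  proof (rule that[of "min r1 r2"])
    show "ball d0 (min r1 r2) \<subseteq> D" using \<open>ball d0 r2 \<subseteq> D\<close> by auto
    show "?G d \<noteq> 0" if "d \<in> ball d0 (min r1 r2)" for d
      using that r1 by (simp add: dist_commute)
  qed (use \<open>r1 > 0\<close> \<open>r2 > 0\<close> in simp)
qed

theorem mainTheorem7:
  fixes L :: "(complex^('n::finite + 'n)) set" and f :: "complex^('n + 'n) \<Rightarrow> complex"
    and q :: "complex^('n + 'n)"
  assumes "lagrangian_pair L f" and "kaehlerian L"
    and "q \<in> L" and "tau q = q" and "f q \<notin> \<real>"
  shows "\<exists>U. openin (top_of_set L) U \<and> q \<in> U \<and>
           complex_lagrangian (con U f) \<and> kaehlerian (con U f)"
proof -
  obtain W D and \<phi> :: "complex^'n \<Rightarrow> complex^('n + 'n)" and \<phi>'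
    where "q \<in> W" and chart: "cchart L W D \<phi> \<phi>'"
    using assms(1,3) unfolding lagrangian_pair_def complex_lagrangian_def csubmanifold_def by blast
  then obtain d0 where "d0 \<in> D" and q: "q = \<phi> d0"
    using \<open>q \<in> L\<close> unfolding cchart_def by blast
  obtain r where "r > 0" and ball: "ball d0 r \<subseteq> D"
    and gram_nz: "\<And>d. d \<in> ball d0 r \<Longrightarrow> det (gram (cone_deriv f \<phi> \<phi>' (vcons 1 d))) \<noteq> 0"
    using ball_det_gram_cone_deriv_nonzero[OF assms(1,2) chart \<open>d0 \<in> D\<close>] assms(4,5) q by blast
  let ?U = "\<phi> ` ball d0 r"
  have "openin (top_of_set L) ?U" by (rule openin_chart_image[OF chart open_ball ball])
  moreover have "q \<in> ?U" using q \<open>r > 0\<close> by simp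
  moreover have "complex_lagrangian (con ?U f)"
    by (rule complex_lagrangian_cone[OF assms(1) chart open_ball ball])
  moreover have "kaehlerian (con ?U f)"
    by (rule kaehlerian_cone[OF assms(1) chart open_ball ball gram_nz])
  ultimately show ?thesis by blast
qed

end
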